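(* Let $\mathfrak{plc}_I$ be a tropical plactic algebra with generators $\{\mathfrak a_i:i\in I\}$, and let $L_m=[\ell_1,\dots,\ell_m]$, $m\ge1$, be a sequence of indices in $I$ with $\mathfrak a_{\ell_1}\le \mathfrak a_{\ell_2}\le\cdots\le\mathfrak a_{\ell_m}$. Then $$\mathfrak a_{\ell_1}\cdots\mathfrak a_{\ell_m}=\sum_{S}\ \prod_{s\in S}\mathfrak a_s,$$ where the sum runs over all nonempty subsequences $S$ of $L_m$ (taken by positions, with the order of $L_m$ preserved in the product).
   Context: A tropical plactic algebra (troplactic algebra) $\mathfrak{plc}_I$ ($I\subseteq\mathbb N$ nonempty) is an idempotent semiring $(\mathfrak{plc}_I,+,\cdot)$ (addition commutative, associative, with $\mathfrak u+\mathfrak u=\mathfrak u$ for all $\mathfrak u$; multiplication associative, possibly noncommutative, with identity $\mathfrak e$; a zero $\mathfrak o$ which is the additive identity and multiplicatively absorbing; multiplication distributes over addition on both sides), generated as a semiring by a totally ordered set of elements $\{\mathfrak a_i: i\in I\}$, such that for all generators $\mathfrak a\le\mathfrak b\le\mathfrak c$: (TPA1) $\mathfrak a=\mathfrak e+\mathfrak a$; (TPA2) $\mathfrak b\mathfrak a=\mathfrak a+\mathfrak b$ when $\mathfrak b>\mathfrak a$; (TPA3) $\mathfrak a(\mathfrak b+\mathfrak c)=\mathfrak a\mathfrak b+\mathfrak c$; (TPA4) $(\mathfrak a+\mathfrak b)\mathfrak c=\mathfrak a+\mathfrak b\mathfrak c$. *)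

theory Defs
  imports Main
begin

inductive_set semiring_gen :: "('a \<Rightarrow> 'a \<Rightarrow> 'a) \<Rightarrow> ('a \<Rightarrow> 'a \<Rightarrow> 'a) \<Rightarrow> 'a \<Rightarrow> 'a \<Rightarrow> 'a set \<Rightarrow> 'a set"
  for add mult e z G where
  gen_base: "x \<in> G \<Longrightarrow> x \<in> semiring_gen add mult e z G"
| gen_one: "e \<in> semiring_gen add mult e z G"
| gen_zero: "z \<in> semiring_gen add mult e z G"
| gen_add: "x \<in> semiring_gen add mult e z G \<Longrightarrow> y \<in> semiring_gen add mult e z G
      \<Longrightarrow> add x y \<in> semiring_gen add mult e z G"
| gen_mult: "x \<in> semiring_gen add mult e z G \<Longrightarrow> y \<in> semiring_gen add mult e z G
      \<Longrightarrow> mult x y \<in> semiring_gen add mult e z G"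

text \<open>Tropical plactic algebra: carrier is the type 'a, addition add, multiplication mult,
  identity e, zero z, generators a i for i in I (I a nonempty subset of nat), totally
  ordered by their indices: a i \<le> a j iff i \<le> j.\<close>
definition troplactic ::
  "('a \<Rightarrow> 'a \<Rightarrow> 'a) \<Rightarrow> ('a \<Rightarrow> 'a \<Rightarrow> 'a) \<Rightarrow> 'a \<Rightarrow> 'a \<Rightarrow> nat set \<Rightarrow> (nat \<Rightarrow> 'a) \<Rightarrow> bool" where
  "troplactic add mult e z I a \<longleftrightarrow>
     I \<noteq> {} \<and>
     (\<forall>u v w. add (add u v) w = add u (add v w)) \<and>
     (\<forall>u v. add u v = add v u) \<and>
     (\<forall>u. add u u = u) \<and>
     (\<forall>u. add z u = u) \<and>
     (\<forall>u v w. mult (mult u v) w = mult u (mult v w)) \<and>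
     (\<forall>u. mult e u = u \<and> mult u e = u) \<and>
     (\<forall>u. mult z u = z \<and> mult u z = z) \<and>
     (\<forall>u v w. mult u (add v w) = add (mult u v) (mult u w)) \<and>
     (\<forall>u v w. mult (add u v) w = add (mult u w) (mult v w)) \<and>
     (\<forall>u. u \<in> semiring_gen add mult e z (a ` I)) \<and>
     inj_on a I \<and>
     (\<forall>i\<in>I. a i = add e (a i)) \<and>
     (\<forall>i\<in>I. \<forall>j\<in>I. i < j \<longrightarrow> mult (a j) (a i) = add (a i) (a j)) \<and>
     (\<forall>i\<in>I. \<forall>j\<in>I. \<forall>k\<in>I. i \<le> j \<longrightarrow> j \<le> k \<longrightarrow>
         mult (a i) (add (a j) (a k)) = add (mult (a i) (a j)) (a k)) \<and>
     (\<forall>i\<in>I. \<forall>j\<in>I. \<forall>k\<in>I. i \<le> j \<longrightarrow> j \<le> k \<longrightarrow>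
         mult (add (a i) (a j)) (a k) = add (a i) (mult (a j) (a k)))"

definition lsum :: "('a \<Rightarrow> 'a \<Rightarrow> 'a) \<Rightarrow> 'a \<Rightarrow> 'a list \<Rightarrow> 'a" where
  "lsum add z xs = foldr add xs z"

definition lprod :: "('a \<Rightarrow> 'a \<Rightarrow> 'a) \<Rightarrow> 'a \<Rightarrow> 'a list \<Rightarrow> 'a" where
  "lprod mult e xs = foldr mult xs e"

end

theory Submission
  imports Defs
begin

text \<open>Only (TPA1) is needed: since \<open>a = e + a\<close>, right distributivity gives
  \<open>a P = P + a P\<close>, so multiplying by one more generator adds to the sum the products
  with that generator prepended, and induction expands the product into the sum over all
  subsequences. The empty subsequence contributes \<open>e\<close>, which is absorbed by any single
  generator \<open>a\<^sub>\<ell> = e + a\<^sub>\<ell>\<close> occurring in the sum. The monotonicity of the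
  indices plays no role.\<close>

lemma Nil_in_subseqs: "[] \<in> set (subseqs xs)"
  by (induction xs) (auto simp: Let_def)

lemma filter_Nil_subseqs: "filter (\<lambda>S. S = []) (subseqs xs) = [[]]"
  by (induction xs) (auto simp: Let_def filter_empty_conv)

locale idempotent_semiring =
  fixes add :: "'a \<Rightarrow> 'a \<Rightarrow> 'a" (infixl "\<oplus>" 65)
    and mult :: "'a \<Rightarrow> 'a \<Rightarrow> 'a" (infixl "\<otimes>" 70)
    and e z :: 'a
  assumes add_assoc: "(u \<oplus> v) \<oplus> w = u \<oplus> (v \<oplus> w)"
    and add_commute: "u \<oplus> v = v \<oplus> u"
    and add_idem: "u \<oplus> u = u"
    and add_zero: "z \<oplus> u = u"
    and mult_assoc: "(u \<otimes> v) \<otimes> w = u \<otimes> (v \<otimes> w)"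
    and mult_one_left: "e \<otimes> u = u" and mult_one_right: "u \<otimes> e = u"
    and mult_zero_left: "z \<otimes> u = z" and mult_zero_right: "u \<otimes> z = z"
    and distrib_left: "u \<otimes> (v \<oplus> w) = u \<otimes> v \<oplus> u \<otimes> w"
    and distrib_right: "(u \<oplus> v) \<otimes> w = u \<otimes> w \<oplus> v \<otimes> w"
begin

lemma add_left_commute: "u \<oplus> (v \<oplus> w) = v \<oplus> (u \<oplus> w)"
  by (metis add_assoc add_commute)

lemma add_zero_right: "u \<oplus> z = u"
  using add_zero add_commute by metis

lemma lsum_Nil [simp]: "lsum add z [] = z"
  and lsum_Cons [simp]: "lsum add z (x # xs) = x \<oplus> lsum add z xs"
  by (simp_all add: lsum_def)

lemma lprod_Nil [simp]: "lprod mult e [] = e"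
  and lprod_Cons [simp]: "lprod mult e (x # xs) = x \<otimes> lprod mult e xs"
  by (simp_all add: lprod_def)

lemma lsum_append: "lsum add z (xs @ ys) = lsum add z xs \<oplus> lsum add z ys"
  by (induction xs) (simp_all add: add_zero add_assoc)

lemma mult_lsum_left: "u \<otimes> lsum add z (map f xs) = lsum add z (map (\<lambda>x. u \<otimes> f x) xs)"
  by (induction xs) (simp_all add: mult_zero_right distrib_left)

lemma lsum_partition:
  "lsum add z (map f xs) =
     lsum add z (map f (filter P xs)) \<oplus> lsum add z (map f (filter (\<lambda>x. \<not> P x) xs))"
  by (induction xs) (simp_all add: add_zero add_assoc add_left_commute)

lemma lsum_absorb: "y \<in> set xs \<Longrightarrow> y \<oplus> lsum add z xs = lsum add z xs"
proof (induction xs)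
  case (Cons x xs)
  show ?case
  proof (cases "y = x")
    case True
    then show ?thesis by (simp add: add_assoc[symmetric] add_idem)
  next
    case False
    then have "y \<oplus> lsum add z xs = lsum add z xs" using Cons by simp
    then show ?thesis by (simp add: add_left_commute[of y x])
  qed
qed simp

lemma lsum_absorb_below:
  assumes "y \<in> set xs" and "u \<oplus> y = y"
  shows "u \<oplus> lsum add z xs = lsum add z xs"
proof -
  have "u \<oplus> lsum add z xs = (u \<oplus> y) \<oplus> lsum add z xs"
    using lsum_absorb[OF assms(1)] by (simp add: add_assoc)
  also have "\<dots> = lsum add z xs"
    using assms by (simp add: lsum_absorb)
  finally show ?thesis .
qed

lemma mult_eq_add_mult_if_one_below:
  assumes "e \<oplus> x = x"
  shows "x \<otimes> p = p \<oplus> x \<otimes> p"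
proof -
  have "x \<otimes> p = (e \<oplus> x) \<otimes> p" using assms by simp
  also have "\<dots> = p \<oplus> x \<otimes> p" by (simp add: distrib_right mult_one_left)
  finally show ?thesis .
qed

lemma lprod_eq_lsum_subseqs:
  assumes "\<forall>x\<in>set xs. e \<oplus> f x = f x"
  shows "lprod mult e (map f xs) = lsum add z (map (\<lambda>S. lprod mult e (map f S)) (subseqs xs))"
  using assms
proof (induction xs)
  case Nil
  then show ?case by (simp add: add_zero_right)
next
  case (Cons x xs)
  let ?P = "lprod mult e (map f xs)"
  have "lsum add z (map (\<lambda>S. lprod mult e (map f S)) (subseqs (x # xs)))
      = f x \<otimes> lsum add z (map (\<lambda>S. lprod mult e (map f S)) (subseqs xs))
          \<oplus> lsum add z (map (\<lambda>S. lprod mult e (map f S)) (subseqs xs))"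
    by (simp add: Let_def o_def lsum_append mult_lsum_left)
  also have "\<dots> = f x \<otimes> ?P \<oplus> ?P"
    using Cons by simp
  also have "\<dots> = f x \<otimes> ?P"
    using mult_eq_add_mult_if_one_below[of "f x" ?P] Cons.prems by (simp add: add_commute)
  finally show ?case by simp
qed

lemma lsum_subseqs_split_Nil:
  "lsum add z (map g (subseqs xs)) = g [] \<oplus> lsum add z (map g (filter (\<lambda>S. S \<noteq> []) (subseqs xs)))"
  using lsum_partition[of g "subseqs xs" "\<lambda>S. S = []"]
  by (simp add: filter_Nil_subseqs add_zero_right)

end

lemma troplactic_idempotent_semiring:
  "troplactic add mult e z I a \<Longrightarrow> idempotent_semiring add mult e z"
  unfolding troplactic_def idempotent_semiring_def by (elim conjE) (intro conjI allI; meson)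

lemma troplactic_one_below_generator:
  assumes "troplactic add mult e z I a" and "i \<in> I"
  shows "add e (a i) = a i"
proof -
  have "\<forall>i\<in>I. a i = add e (a i)"
    using assms(1) unfolding troplactic_def by (elim conjE) assumption
  then show ?thesis using assms(2) by metis
qed

theorem mainTheorem2:
  fixes add mult :: "'a \<Rightarrow> 'a \<Rightarrow> 'a" and e z :: 'a
    and I :: "nat set" and a :: "nat \<Rightarrow> 'a" and L :: "nat list"
  assumes "troplactic add mult e z I a"
    and "L \<noteq> []" and "set L \<subseteq> I" and "sorted L"
  shows "lprod mult e (map a L) =
    lsum add z (map (\<lambda>S. lprod mult e (map a S)) (filter (\<lambda>S. S \<noteq> []) (subseqs L)))"
proof -
  interpret idempotent_semiring add mult e z
    using assms(1) by (rule troplactic_idempotent_semiring)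
  have one_below: "\<forall>i\<in>set L. add e (a i) = a i"
    using assms(3) troplactic_one_below_generator[OF assms(1)] by blast
  let ?F = "\<lambda>S. lprod mult e (map a S)"
  let ?R = "lsum add z (map ?F (filter (\<lambda>S. S \<noteq> []) (subseqs L)))"
  obtain l ls where L: "L = l # ls" using assms(2) by (cases L) auto
  have "[l] \<in> set (filter (\<lambda>S. S \<noteq> []) (subseqs L))"
    using Nil_in_subseqs[of ls] L by (simp add: Let_def)
  moreover have "a l = ?F [l]" by (simp add: mult_one_right)
  ultimately have "a l \<in> set (map ?F (filter (\<lambda>S. S \<noteq> []) (subseqs L)))"
    unfolding set_map by (rule rev_image_eqI)
  moreover have "add e (a l) = a l" using one_below L by simp
  ultimately have absorb: "add e ?R = ?R" by (rule lsum_absorb_below)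
  have "lprod mult e (map a L) = lsum add z (map ?F (subseqs L))"
    using one_below by (rule lprod_eq_lsum_subseqs)
  also have "\<dots> = add e ?R"
    using lsum_subseqs_split_Nil[of ?F L] by simp
  finally show ?thesis using absorb by simp
qed

end
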